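(* Consider any sequences evolved by Algorithm 2, let $d_0:=\|x^0-x^*\|>0$, $C:=\lambda_1^{\frac{p-1}{p+1}}\theta^{\frac{2}{p+1}}(1-\sigma^2)^{\frac{p-1}{p+1}}$, and for integers $m\ge0$ put $Q_m:=\Big(1+\frac{2\mu C}{d_0^{2(p-1)/(p+1)}}\,m^{\frac{p-1}{p+1}}\Big)^m$. Then: (a) for all $k\ge0$, $h(y^{k+1})-h(x^* )\le\frac{d_0^2}{2\lambda_1Q_k}$ and $\max\{\|x^*-x^{k+1}\|^2,\|x^*-y^{k+1}\|^2\}\le\frac{d_0^2}{\mu\lambda_1Q_k}$; in particular both are $\mathcal O\big(k^{-k\frac{p-1}{p+1}}\big)$; (b) for all $k\ge1$, $v^{k+1}\in\partial_{\varepsilon_{k+1}}f(y^{k+1})+\partial g(y^{k+1})$, $\|v^{k+1}\|^2\le\Big(1+\sigma\sqrt{1+\mu C d_0^{-2(p-1)/(p+1)}}\Big)^2\frac{6\,d_0^{2(3p-1)/(p+1)}}{\mu C^2\lambda_1Q_{k-1}}$, and $\varepsilon_{k+1}\le\frac{3\sigma^2d_0^{4p/(p+1)}}{\mu C\lambda_1Q_{k-1}}$; in particular both are $\mathcal O\big((k-1)^{-(k-1)\frac{p-1}{p+1}}\big)$.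
   Context: Setting: $\mathcal H$ is a finite-dimensional real inner product space with inner product $\langle\cdot,\cdot\rangle$ and norm $\|\cdot\|$. $f,g:\mathcal H\to(-\infty,\infty]$ are proper, closed, convex functions, $h:=f+g$ has nonempty domain, and $g$ is $\mu$-strongly convex for some $\mu>0$, i.e. $g(tx+(1-t)y)\le tg(x)+(1-t)g(y)-\frac{\mu}{2}t(1-t)\|x-y\|^2$ for all $x,y\in\mathcal H$, $t\in[0,1]$. $x^*$ denotes the unique minimizer of $h$. For $\varepsilon\ge 0$, $\partial_\varepsilon f(y):=\{u\in\mathcal H: f(w)\ge f(y)+\langle u,w-y\rangle-\varepsilon\ \forall w\in\mathcal H\}$, and $\partial g:=\partial_0 g$. Algorithm 2: Choose $x^0,y^0\in\mathcal H$, $\sigma\in[0,1)$, $p\ge2$ and $\theta>0$, and set $A_0=0$. For $k=0,1,2,\dots$: choose $\lambda_{k+1}>0$, set $a_{k+1}=\frac{(1+2\mu A_k)\lambda_{k+1}+\sqrt{(1+2\mu A_k)^2\lambda_{k+1}^2+4(1+\mu A_k)A_k\lambda_{k+1}}}{2}$ and $\tilde x^k=\frac{a_{k+1}-\mu A_k\lambda_{k+1}}{A_k+a_{k+1}}x^k+\frac{A_k+\mu A_k\lambda_{k+1}}{A_k+a_{k+1}}y^k$; compute $(y^{k+1},v^{k+1},\varepsilon_{k+1})\in\mathcal H\times\mathcal H\times[0,\infty)$ such that $v^{k+1}\in\partial_{\varepsilon_{k+1}}f(y^{k+1})+\partial g(y^{k+1})$, $\frac{\|\lambda_{k+1}v^{k+1}+y^{k+1}-\tilde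 x^k\|^2}{1+\lambda_{k+1}\mu}+2\lambda_{k+1}\varepsilon_{k+1}\le\sigma^2\|y^{k+1}-\tilde x^k\|^2$, and $\lambda_{k+1}\|y^{k+1}-\tilde x^k\|^{p-1}\ge\theta$; then set $A_{k+1}=A_k+a_{k+1}$ and $x^{k+1}=\frac{1+\mu A_k}{1+\mu A_{k+1}}x^k+\frac{\mu a_{k+1}}{1+\mu A_{k+1}}y^{k+1}-\frac{a_{k+1}}{1+\mu A_{k+1}}v^{k+1}$. "Sequences evolved by Algorithm 2" means any sequences satisfying all these relations for every $k\ge 0$. The convention $0^0=1$ is used in $Q_0$. *)

theory Defs
  imports "HOL-Analysis.Analysis"
begin

definition proper_fun :: "('a \<Rightarrow> ereal) \<Rightarrow> bool" where
  "proper_fun f \<longleftrightarrow> (\<forall>x. f x \<noteq> -\<infinity>) \<and> (\<exists>x. f x \<noteq> \<infinity>)"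

definition closed_fun :: "('a::topological_space \<Rightarrow> ereal) \<Rightarrow> bool" where
  "closed_fun f \<longleftrightarrow> closed {(x, t::real). f x \<le> ereal t}"

definition convex_fun :: "('a::real_vector \<Rightarrow> ereal) \<Rightarrow> bool" where
  "convex_fun f \<longleftrightarrow> (\<forall>x y. \<forall>t::real. 0 \<le> t \<and> t \<le> 1 \<longrightarrow>
      f (t *\<^sub>R x + (1 - t) *\<^sub>R y) \<le> ereal t * f x + ereal (1 - t) * f y)"

definition strongly_convex_fun :: "real \<Rightarrow> ('a::real_normed_vector \<Rightarrow> ereal) \<Rightarrow> bool" where
  "strongly_convex_fun \<mu> g \<longleftrightarrow> (\<forall>x y. \<forall>t::real. 0 \<le> t \<and> t \<le> 1 \<longrightarrow>
      g (t *\<^sub>R x + (1 - t) *\<^sub>R y) \<le> ereal t * g x + ereal (1 - t) * g y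
        - ereal (\<mu> / 2 * t * (1 - t) * (norm (x - y))\<^sup>2))"

definition dom_fun :: "('a \<Rightarrow> ereal) \<Rightarrow> 'a set" where
  "dom_fun f = {x. f x < \<infinity>}"

definition eps_subdiff :: "real \<Rightarrow> ('a::real_inner \<Rightarrow> ereal) \<Rightarrow> 'a \<Rightarrow> 'a set" where
  "eps_subdiff \<epsilon> f y = {u. \<forall>w. f w \<ge> f y + ereal (inner u (w - y)) - ereal \<epsilon>}"

definition subdiff :: "('a::real_inner \<Rightarrow> ereal) \<Rightarrow> 'a \<Rightarrow> 'a set" where
  "subdiff f y = eps_subdiff 0 f y"

definition set_plus_vec :: "'a::plus set \<Rightarrow> 'a set \<Rightarrow> 'a set" where
  "set_plus_vec A B = {a + b | a b. a \<in> A \<and> b \<in> B}"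

definition algorithm2 ::
  "('a::euclidean_space \<Rightarrow> ereal) \<Rightarrow> ('a \<Rightarrow> ereal) \<Rightarrow> real \<Rightarrow> real \<Rightarrow> real \<Rightarrow> real \<Rightarrow>
   (nat \<Rightarrow> real) \<Rightarrow> (nat \<Rightarrow> real) \<Rightarrow> (nat \<Rightarrow> real) \<Rightarrow> (nat \<Rightarrow> 'a) \<Rightarrow> (nat \<Rightarrow> 'a) \<Rightarrow>
   (nat \<Rightarrow> 'a) \<Rightarrow> (nat \<Rightarrow> 'a) \<Rightarrow> (nat \<Rightarrow> real) \<Rightarrow> bool" where
  "algorithm2 f g \<mu> \<sigma> p \<theta> lam a A x xt y v eps \<longleftrightarrow>
     0 \<le> \<sigma> \<and> \<sigma> < 1 \<and> 2 \<le> p \<and> 0 < \<theta> \<and> A 0 = 0 \<and>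
     (\<forall>k. 0 < lam (Suc k)
        \<and> a (Suc k) = ((1 + 2 * \<mu> * A k) * lam (Suc k)
              + sqrt (((1 + 2 * \<mu> * A k) * lam (Suc k))\<^sup>2
                      + 4 * (1 + \<mu> * A k) * A k * lam (Suc k))) / 2
        \<and> xt k = ((a (Suc k) - \<mu> * A k * lam (Suc k)) / (A k + a (Suc k))) *\<^sub>R x k
              + ((A k + \<mu> * A k * lam (Suc k)) / (A k + a (Suc k))) *\<^sub>R y k
        \<and> 0 \<le> eps (Suc k)
        \<and> v (Suc k) \<in> set_plus_vec (eps_subdiff (eps (Suc k)) f (y (Suc k))) (subdiff g (y (Suc k)))
        \<and> (norm (lam (Suc k) *\<^sub>R v (Suc k) + y (Suc k) - xt k))\<^sup>2 / (1 + lam (Suc k) * \<mu>)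
            + 2 * lam (Suc k) * eps (Suc k) \<le> \<sigma>\<^sup>2 * (norm (y (Suc k) - xt k))\<^sup>2
        \<and> lam (Suc k) * norm (y (Suc k) - xt k) powr (p - 1) \<ge> \<theta>
        \<and> A (Suc k) = A k + a (Suc k)
        \<and> x (Suc k) = ((1 + \<mu> * A k) / (1 + \<mu> * A (Suc k))) *\<^sub>R x k
              + (\<mu> * a (Suc k) / (1 + \<mu> * A (Suc k))) *\<^sub>R y (Suc k)
              - (a (Suc k) / (1 + \<mu> * A (Suc k))) *\<^sub>R v (Suc k))"

end

theory Submission
  imports Defs
begin

text \<open>
  An estimate-sequence argument. The inclusion for v_(k+1) yields a quadratic lower model
  gamma_k <= h around y_(k+1) (the eps-subgradient inequality for f plus strong convexity of g),
  and psi_k = |. - x_0|^2/2 + sum_j a_(j+1) gamma_j is a quadratic minimised at x_k. The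
  relative-error criterion maintains A_k h(y_k) + (accumulated slack) <= min psi_k, whereas
  psi_k is at most d_0^2/2 + A_k h(x*) at x*. Hence the gap is at most d_0^2/(2 A_k), the
  squared distances to x* are at most d_0^2/(mu A_k), and the total slack is at most d_0^2/2.

  By the large-step condition the k-th slack is at least a constant times
  lambda_(k+1)^(-(p+1)/(p-1)), so these powers have bounded sum; since
  A_(k+1) >= lambda_1 prod_j (1 + 2 mu lambda_(j+2)), the AM-GM inequality gives
  A_(k+1) >= lambda_1 Q_k. The slack bound also forces lambda_(k+1) >= C d_0^(-2(p-1)/(p+1)),
  and with this the error criterion turns the distance bounds of (a) into the bounds on v and eps.
\<close>

lemma norm_sq_weighted_sum_le:
  fixes e f :: "'a::real_inner"
  assumes "0 \<le> c1" "0 \<le> c2"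
  shows "(norm (c1 *\<^sub>R e + c2 *\<^sub>R f))\<^sup>2 \<le> (c1 + c2) * (c1 * (norm e)\<^sup>2 + c2 * (norm f)\<^sup>2)"
proof -
  have "(c1 + c2) * (c1 * (norm e)\<^sup>2 + c2 * (norm f)\<^sup>2) - (norm (c1 *\<^sub>R e + c2 *\<^sub>R f))\<^sup>2
        = c1 * c2 * (norm (e - f))\<^sup>2"
    by (simp only: power2_norm_eq_inner) (simp add: inner_simps inner_commute algebra_simps)
  moreover have "0 \<le> c1 * c2 * (norm (e - f))\<^sup>2" using assms by simp
  ultimately show ?thesis by linarith
qed

lemma norm_sq_diff_le: "(norm (a - b))\<^sup>2 \<le> 2 * (norm a)\<^sup>2 + 2 * (norm (b::'a::real_inner))\<^sup>2"
  using norm_sq_weighted_sum_le[of 1 1 a "- b"] by simp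

lemma sq_norm_plus_inner_ge:
  fixes b d :: "'a::real_inner"
  assumes "0 < c"
  shows "- (norm b)\<^sup>2 / c \<le> c * (norm d)\<^sup>2 + 2 * inner b d"
proof -
  have "c * (c * (norm d)\<^sup>2 + 2 * inner b d) + (norm b)\<^sup>2 = (norm (c *\<^sub>R d + b))\<^sup>2"
    by (simp only: power2_norm_eq_inner) (simp add: inner_simps inner_commute algebra_simps)
  then have "0 \<le> c * (c * (norm d)\<^sup>2 + 2 * inner b d) + (norm b)\<^sup>2" by (metis zero_le_power2)
  then show ?thesis using assms by (simp add: field_simps)
qed

lemma weighted_sq_norm_split:
  fixes e1 e2 :: "'a::real_inner"
  assumes "0 < A + a"
  shows "A * (norm e1)\<^sup>2 + a * (norm e2)\<^sup>2
       = (norm (A *\<^sub>R e1 + a *\<^sub>R e2))\<^sup>2 / (A + a) + A * a / (A + a) * (norm (e2 - e1))\<^sup>2"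
proof -
  have "(A + a) * (A * (norm e1)\<^sup>2 + a * (norm e2)\<^sup>2)
      = (norm (A *\<^sub>R e1 + a *\<^sub>R e2))\<^sup>2 + A * a * (norm (e2 - e1))\<^sup>2"
    by (simp only: power2_norm_eq_inner) (simp add: inner_simps inner_commute algebra_simps)
  then have "A * (norm e1)\<^sup>2 + a * (norm e2)\<^sup>2
      = ((norm (A *\<^sub>R e1 + a *\<^sub>R e2))\<^sup>2 + A * a * (norm (e2 - e1))\<^sup>2) / (A + a)"
    using assms by (simp add: eq_divide_eq mult.commute)
  then show ?thesis by (simp add: add_divide_distrib)
qed

lemma sum_quadratics_recentre:
  fixes p q m z w :: "'a::real_inner"
  assumes "(\<alpha> + \<beta>) *\<^sub>R m = \<alpha> *\<^sub>R p + \<beta> *\<^sub>R q - w"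
  shows "\<alpha>/2 * (norm (z - p))\<^sup>2 + \<beta>/2 * (norm (z - q))\<^sup>2 + inner w z
       = \<alpha>/2 * (norm (m - p))\<^sup>2 + \<beta>/2 * (norm (m - q))\<^sup>2 + inner w m
         + (\<alpha> + \<beta>)/2 * (norm (z - m))\<^sup>2"
proof -
  have "w = \<alpha> *\<^sub>R p + \<beta> *\<^sub>R q - (\<alpha> + \<beta>) *\<^sub>R m" using assms by (simp add: algebra_simps)
  then show ?thesis
    by (simp only: power2_norm_eq_inner) (simp add: inner_simps inner_commute algebra_simps, simp add: field_simps)
qed

lemma positive_root_quadratic:
  fixes B R :: real
  assumes "0 \<le> B" "0 \<le> R" "a = (B + sqrt (B\<^sup>2 + R)) / 2"
  shows "B \<le> a" "a\<^sup>2 = B * a + R / 4"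
proof -
  have "B \<le> sqrt (B\<^sup>2 + R)" using assms(1,2) by (simp add: real_le_rsqrt)
  then show "B \<le> a" using assms(3) by simp
  have "(sqrt (B\<^sup>2 + R))\<^sup>2 = B\<^sup>2 + R" using assms(2) by simp
  then show "a\<^sup>2 = B * a + R / 4" unfolding assms(3) by (simp add: power2_eq_square field_simps)
qed

lemma le_of_strong_convexity_chord:
  fixes u v s c :: real
  assumes "\<And>t. 0 < t \<Longrightarrow> t < 1 \<Longrightarrow> v + t * s \<le> t * u + (1 - t) * v - c * t * (1 - t)"
  shows "v + s + c \<le> u"
proof -
  have "z * c \<le> u - v - s" if "0 < z" "z < 1" for z
  proof -
    have "(1 - z) * (s + z * c) \<le> (1 - z) * (u - v)"
      using assms[of "1 - z"] that by (simp add: algebra_simps)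
    then show ?thesis using that by simp
  qed
  then have "c \<le> u - v - s" by (rule field_le_mult_one_interval)
  then show ?thesis by simp
qed

lemma eps_subdiff_finite:
  assumes "proper_fun f" "u \<in> eps_subdiff \<epsilon> f y"
  shows "f y = ereal (real_of_ereal (f y))"
proof -
  obtain z where "f z \<noteq> \<infinity>" using assms(1) unfolding proper_fun_def by auto
  moreover have "f y + ereal (inner u (z - y)) - ereal \<epsilon> \<le> f z"
    using assms(2) unfolding eps_subdiff_def by auto
  ultimately have "f y \<noteq> \<infinity>" by auto
  moreover have "f y \<noteq> -\<infinity>" using assms(1) unfolding proper_fun_def by auto
  ultimately show ?thesis by (cases "f y") auto
qed

lemma strongly_convex_subgradient_ineq:
  fixes g :: "'a::real_inner \<Rightarrow> ereal"
  assumes "proper_fun g" "strongly_convex_fun \<mu> g"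
    and w: "w \<in> subdiff g y" and gy: "g y = ereal gy"
  shows "ereal (gy + inner w (z - y) + \<mu>/2 * (norm (z - y))\<^sup>2) \<le> g z"
proof (cases "g z = \<infinity>")
  case False
  then obtain gz where gz: "g z = ereal gz"
    using assms(1) unfolding proper_fun_def by (cases "g z") auto
  have "gy + inner w (z - y) + \<mu>/2 * (norm (z - y))\<^sup>2 \<le> gz"
  proof (rule le_of_strong_convexity_chord)
    fix t :: real assume t: "0 < t" "t < 1"
    define m where "m = t *\<^sub>R z + (1 - t) *\<^sub>R y"
    have "g y + ereal (inner w (m - y)) - ereal 0 \<le> g m"
      using w unfolding subdiff_def eps_subdiff_def by blast
    moreover have "m - y = t *\<^sub>R (z - y)" by (simp add: m_def algebra_simps)
    ultimately have "ereal (gy + t * inner w (z - y)) \<le> g m" using gy by simp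
    also have "g m \<le> ereal t * g z + ereal (1 - t) * g y - ereal (\<mu>/2 * t * (1 - t) * (norm (z - y))\<^sup>2)"
      using assms(2) t unfolding strongly_convex_fun_def m_def by auto
    also have "\<dots> = ereal (t * gz + (1 - t) * gy - \<mu>/2 * t * (1 - t) * (norm (z - y))\<^sup>2)"
      using gy gz by simp
    finally show "gy + t * inner w (z - y)
        \<le> t * gz + (1 - t) * gy - \<mu>/2 * (norm (z - y))\<^sup>2 * t * (1 - t)"
      by (simp add: algebra_simps)
  qed
  then show ?thesis using gz by simp
qed simp

lemma strongly_convex_sum_growth_at_min:
  fixes f g :: "'a::real_inner \<Rightarrow> ereal"
  assumes "proper_fun f" "proper_fun g" "convex_fun f" "strongly_convex_fun \<mu> g"
    and fy: "f y = ereal fy" and gy: "g y = ereal gy"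
    and fx: "f xs = ereal fx" and gx: "g xs = ereal gx"
    and min: "\<forall>z. f xs + g xs \<le> f z + g z"
  shows "\<mu>/2 * (norm (y - xs))\<^sup>2 \<le> (fy + gy) - (fx + gx)"
proof -
  have "(fx + gx) + 0 + \<mu>/2 * (norm (y - xs))\<^sup>2 \<le> fy + gy"
  proof (rule le_of_strong_convexity_chord)
    fix t :: real assume t: "0 < t" "t < 1"
    define m where "m = t *\<^sub>R y + (1 - t) *\<^sub>R xs"
    have uf: "f m \<le> ereal t * f y + ereal (1 - t) * f xs"
      using assms(3) t unfolding convex_fun_def m_def by auto
    have ug: "g m \<le> ereal t * g y + ereal (1 - t) * g xs - ereal (\<mu>/2 * t * (1 - t) * (norm (y - xs))\<^sup>2)"
      using assms(4) t unfolding strongly_convex_fun_def m_def by auto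
    have "f m \<noteq> -\<infinity>" "g m \<noteq> -\<infinity>" using assms(1,2) unfolding proper_fun_def by auto
    then obtain fm gm where fm: "f m = ereal fm" and gm: "g m = ereal gm"
      using uf ug fy gy fx gx by (cases "f m"; cases "g m") auto
    have "fx + gx \<le> fm + gm" using min[rule_format, of m] fm gm fx gx by simp
    then show "fx + gx + t * 0 \<le> t * (fy + gy) + (1 - t) * (fx + gx) - \<mu>/2 * (norm (y - xs))\<^sup>2 * t * (1 - t)"
      using uf ug fm gm fy gy fx gx by (simp add: algebra_simps)
  qed
  then show ?thesis by simp
qed

lemma hpe_error_lower_bound:
  fixes v r d :: "'a::real_inner"
  assumes "0 < lm" "0 \<le> \<mu>"
    and err: "(norm (lm *\<^sub>R v + r))\<^sup>2 / (1 + lm * \<mu>) + 2 * lm * \<epsilon> \<le> \<sigma>\<^sup>2 * (norm r)\<^sup>2"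
  shows "2 * lm * \<epsilon> + (1 - \<sigma>\<^sup>2) * (norm r)\<^sup>2 \<le> 2 * lm * inner v d + lm * \<mu> * (norm d)\<^sup>2 + (norm (d + r))\<^sup>2"
proof -
  have "2 * lm * inner v d + lm * \<mu> * (norm d)\<^sup>2 + (norm (d + r))\<^sup>2
      = (1 + lm * \<mu>) * (norm d)\<^sup>2 + 2 * inner (lm *\<^sub>R v + r) d + (norm r)\<^sup>2"
    by (simp only: power2_norm_eq_inner) (simp add: inner_simps inner_commute algebra_simps)
  moreover have "- (norm (lm *\<^sub>R v + r))\<^sup>2 / (1 + lm * \<mu>)
      \<le> (1 + lm * \<mu>) * (norm d)\<^sup>2 + 2 * inner (lm *\<^sub>R v + r) d"
    using assms(1,2) by (intro sq_norm_plus_inner_ge) (simp add: add_pos_nonneg)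
  ultimately show ?thesis using err by (simp add: algebra_simps)
qed

lemma extrapolation_distance_le:
  fixes x y x' w xt :: "'a::real_inner"
  assumes "0 \<le> A" "0 < a" "0 < lm" "0 \<le> \<mu>" "\<mu> * A * lm \<le> a"
    and quad: "a\<^sup>2 = lm * (a * (1 + 2 * \<mu> * A) + A * (1 + \<mu> * A))"
    and A': "A' = A + a"
    and xt: "xt = ((a - \<mu> * A * lm) / A') *\<^sub>R x + ((A + \<mu> * A * lm) / A') *\<^sub>R y"
    and w: "A' *\<^sub>R w = A *\<^sub>R y + a *\<^sub>R x'"
  shows "A' / (2 * lm) * (norm (w - xt))\<^sup>2
       \<le> (1 + \<mu> * A) / 2 * (norm (x' - x))\<^sup>2 + \<mu> / 2 * (A * a / A') * (norm (x' - y))\<^sup>2"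
proof -
  have A'pos: "0 < A'" using assms(1,2) A' by simp
  have "A' *\<^sub>R xt = (a - \<mu> * A * lm) *\<^sub>R x + (A + \<mu> * A * lm) *\<^sub>R y"
    using A'pos by (simp add: xt scaleR_add_right)
  then have "A' *\<^sub>R (w - xt) = (a - \<mu> * A * lm) *\<^sub>R (x' - x) + (\<mu> * A * lm) *\<^sub>R (x' - y)"
    using w A' by (simp add: algebra_simps)
  then have "A'\<^sup>2 * (norm (w - xt))\<^sup>2
      = (norm ((a - \<mu> * A * lm) *\<^sub>R (x' - x) + (\<mu> * A * lm) *\<^sub>R (x' - y)))\<^sup>2"
    using A'pos by (metis abs_of_pos norm_scaleR power_mult_distrib)
  also have "\<dots> \<le> a * ((a - \<mu> * A * lm) * (norm (x' - x))\<^sup>2 + \<mu> * A * lm * (norm (x' - y))\<^sup>2)"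
    using norm_sq_weighted_sum_le[of "a - \<mu> * A * lm" "\<mu> * A * lm" "x' - x" "x' - y"] assms(1-5)
    by simp
  also have "\<dots> = a * (a - \<mu> * A * lm) * (norm (x' - x))\<^sup>2 + lm * \<mu> * A * a * (norm (x' - y))\<^sup>2"
    by (simp add: algebra_simps)
  also have "a * (a - \<mu> * A * lm) = lm * A' * (1 + \<mu> * A)"
    using quad A' by (simp add: power2_eq_square algebra_simps)
  finally have "A'\<^sup>2 * (norm (w - xt))\<^sup>2
      \<le> lm * A' * (1 + \<mu> * A) * (norm (x' - x))\<^sup>2 + lm * \<mu> * A * a * (norm (x' - y))\<^sup>2" .
  then have "A'\<^sup>2 * (norm (w - xt))\<^sup>2 / (2 * lm * A')
      \<le> (lm * A' * (1 + \<mu> * A) * (norm (x' - x))\<^sup>2 + lm * \<mu> * A * a * (norm (x' - y))\<^sup>2) / (2 * lm * A')"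
    using A'pos assms(3) by (intro divide_right_mono) auto
  then show ?thesis using A'pos assms(3) by (simp add: power2_eq_square field_simps)
qed

lemma convex_combination_model_eq:
  fixes v x' y y' w :: "'a::real_inner"
  assumes pos: "0 < A + a" and w: "(A + a) *\<^sub>R w = A *\<^sub>R y + a *\<^sub>R x'"
  shows "A * (inner v (y - y') + \<mu>/2 * (norm (y - y'))\<^sup>2) + a * (inner v (x' - y') + \<mu>/2 * (norm (x' - y'))\<^sup>2)
       = (A + a) * (inner v (w - y') + \<mu>/2 * (norm (w - y'))\<^sup>2) + \<mu>/2 * (A * a / (A + a)) * (norm (x' - y))\<^sup>2"
proof -
  have split: "A *\<^sub>R (y - y') + a *\<^sub>R (x' - y') = (A + a) *\<^sub>R (w - y')"
    using w by (simp add: algebra_simps)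
  have "A * (norm (y - y'))\<^sup>2 + a * (norm (x' - y'))\<^sup>2
      = (norm ((A + a) *\<^sub>R (w - y')))\<^sup>2 / (A + a) + A * a / (A + a) * (norm (x' - y))\<^sup>2"
    using weighted_sq_norm_split[OF pos, of "y - y'" "x' - y'"] split by simp
  also have "(norm ((A + a) *\<^sub>R (w - y')))\<^sup>2 / (A + a) = (A + a) * (norm (w - y'))\<^sup>2"
    using pos by (simp add: power2_eq_square)
  finally have sq: "A * (norm (y - y'))\<^sup>2 + a * (norm (x' - y'))\<^sup>2
      = (A + a) * (norm (w - y'))\<^sup>2 + A * a / (A + a) * (norm (x' - y))\<^sup>2" .
  have lin: "A * inner v (y - y') + a * inner v (x' - y') = (A + a) * inner v (w - y')"
    using arg_cong[OF split, of "inner v"] by (simp add: inner_add_right)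
  have "A * (inner v (y - y') + \<mu>/2 * (norm (y - y'))\<^sup>2) + a * (inner v (x' - y') + \<mu>/2 * (norm (x' - y'))\<^sup>2)
      = (A * inner v (y - y') + a * inner v (x' - y')) + \<mu>/2 * (A * (norm (y - y'))\<^sup>2 + a * (norm (x' - y'))\<^sup>2)"
    by (simp add: algebra_simps)
  also have "\<dots> = (A + a) * inner v (w - y')
      + \<mu>/2 * ((A + a) * (norm (w - y'))\<^sup>2 + A * a / (A + a) * (norm (x' - y))\<^sup>2)"
    by (simp only: sq lin)
  finally show ?thesis by (simp add: algebra_simps)
qed

text \<open>One step of the estimate-sequence argument: at the convex combination \<open>w\<close> of \<open>y\<close> and
  \<open>x'\<close>, the extrapolation term controls \<open>norm (w - xt)\<close>, and the relative-error criterion turns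
  what remains into the slack on the left.\<close>

lemma estimate_sequence_step:
  fixes x y y' v xt x' :: "'a::real_inner"
  assumes "0 \<le> A" "0 < a" "0 < lm" "0 \<le> \<mu>" "\<mu> * A * lm \<le> a"
    and "a\<^sup>2 = lm * (a * (1 + 2 * \<mu> * A) + A * (1 + \<mu> * A))"
    and A': "A' = A + a"
    and "xt = ((a - \<mu> * A * lm) / A') *\<^sub>R x + ((A + \<mu> * A * lm) / A') *\<^sub>R y"
    and err: "(norm (lm *\<^sub>R v + y' - xt))\<^sup>2 / (1 + lm * \<mu>) + 2 * lm * \<epsilon> \<le> \<sigma>\<^sup>2 * (norm (y' - xt))\<^sup>2"
  shows "A' * (1 - \<sigma>\<^sup>2) / (2 * lm) * (norm (y' - xt))\<^sup>2
       \<le> A * (inner v (y - y') - \<epsilon> + \<mu>/2 * (norm (y - y'))\<^sup>2)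
         + a * (inner v (x' - y') - \<epsilon> + \<mu>/2 * (norm (x' - y'))\<^sup>2)
         + (1 + \<mu> * A) / 2 * (norm (x' - x))\<^sup>2"
proof -
  have A'pos: "0 < A'" using assms(1,2) A' by simp
  define w where "w = (1 / A') *\<^sub>R (A *\<^sub>R y + a *\<^sub>R x')"
  define d where "d = w - y'"
  define r where "r = y' - xt"
  have w: "A' *\<^sub>R w = A *\<^sub>R y + a *\<^sub>R x'" using A'pos by (simp add: w_def)
  have "A' / (2 * lm) * (norm (d + r))\<^sup>2
      \<le> (1 + \<mu> * A) / 2 * (norm (x' - x))\<^sup>2 + \<mu> / 2 * (A * a / A') * (norm (x' - y))\<^sup>2"
    using extrapolation_distance_le[OF assms(1-8) w] by (simp add: d_def r_def)
  then have "A' * (inner v d - \<epsilon> + \<mu>/2 * (norm d)\<^sup>2) + A' / (2 * lm) * (norm (d + r))\<^sup>2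
      \<le> A * (inner v (y - y') - \<epsilon> + \<mu>/2 * (norm (y - y'))\<^sup>2)
         + a * (inner v (x' - y') - \<epsilon> + \<mu>/2 * (norm (x' - y'))\<^sup>2)
         + (1 + \<mu> * A) / 2 * (norm (x' - x))\<^sup>2"
    using convex_combination_model_eq[of A a w y x' v y' \<mu>] A'pos w A'
    by (simp add: d_def algebra_simps)
  moreover have "A' / (2 * lm) * (2 * lm * \<epsilon> + (1 - \<sigma>\<^sup>2) * (norm r)\<^sup>2)
      \<le> A' / (2 * lm) * (2 * lm * inner v d + lm * \<mu> * (norm d)\<^sup>2 + (norm (d + r))\<^sup>2)"
    using hpe_error_lower_bound[of lm \<mu> v r \<epsilon> \<sigma> d] err assms(3,4) A'pos
    by (intro mult_left_mono) (simp_all add: r_def add_diff_eq)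
  moreover have "A' * (inner v d - \<epsilon> + \<mu>/2 * (norm d)\<^sup>2) + A' / (2 * lm) * (norm (d + r))\<^sup>2
      = A' / (2 * lm) * (2 * lm * inner v d + lm * \<mu> * (norm d)\<^sup>2 + (norm (d + r))\<^sup>2) - A' * \<epsilon>"
    using assms(3) by (simp add: field_simps)
  moreover have "A' / (2 * lm) * (2 * lm * \<epsilon> + (1 - \<sigma>\<^sup>2) * (norm r)\<^sup>2) - A' * \<epsilon>
      = A' * (1 - \<sigma>\<^sup>2) / (2 * lm) * (norm (y' - xt))\<^sup>2"
    using assms(3) by (simp add: r_def field_simps)
  ultimately show ?thesis by linarith
qed

lemma hpe_error_norm_le:
  fixes v r :: "'a::real_inner"
  assumes "0 < lm" "0 \<le> \<mu>" "0 \<le> \<sigma>" "0 \<le> \<epsilon>"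
    and err: "(norm (lm *\<^sub>R v + r))\<^sup>2 / (1 + lm * \<mu>) + 2 * lm * \<epsilon> \<le> \<sigma>\<^sup>2 * (norm r)\<^sup>2"
  shows "lm * norm v \<le> (1 + \<sigma> * sqrt (1 + lm * \<mu>)) * norm r"
proof -
  define c where "c = 1 + lm * \<mu>"
  have c: "0 < c" unfolding c_def using assms(1,2) by (simp add: add_pos_nonneg)
  have "(norm (lm *\<^sub>R v + r))\<^sup>2 / c \<le> \<sigma>\<^sup>2 * (norm r)\<^sup>2"
    using err assms(1,4) unfolding c_def by (smt (verit) mult_nonneg_nonneg)
  then have "(norm (lm *\<^sub>R v + r))\<^sup>2 \<le> \<sigma>\<^sup>2 * (norm r)\<^sup>2 * c"
    using pos_divide_le_eq[OF c] by blast
  also have "\<dots> = (\<sigma> * sqrt c * norm r)\<^sup>2"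
    using c by (simp add: power_mult_distrib)
  finally have "norm (lm *\<^sub>R v + r) \<le> \<sigma> * sqrt c * norm r"
    by (rule power2_le_imp_le) (use assms(3) c in \<open>simp add: less_imp_le\<close>)
  then show ?thesis
    using norm_triangle_ineq4[of "lm *\<^sub>R v + r" r] assms(1) by (simp add: c_def algebra_simps)
qed

lemma one_plus_geometric_mean_power_le_prod:
  fixes x :: "nat \<Rightarrow> real"
  assumes S: "finite S" "S \<noteq> {}" and x: "\<And>i. i \<in> S \<Longrightarrow> 0 \<le> x i"
  shows "(1 + (\<Prod>i\<in>S. x i) powr (1 / card S)) ^ card S \<le> (\<Prod>i\<in>S. 1 + x i)"
proof -
  define n where "n = card S"
  define P where "P = (\<Prod>i\<in>S. 1 + x i)"
  define X where "X = (\<Prod>i\<in>S. x i)"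
  have n: "0 < n" using S by (simp add: n_def card_gt_0_iff)
  have P: "0 < P" unfolding P_def using x by (intro prod_pos) (auto intro: add_pos_nonneg)
  have X: "0 \<le> X" unfolding X_def using x by (intro prod_nonneg) auto
  have pos: "0 < 1 + x i" if "i \<in> S" for i using x[OF that] by simp
  \<comment> \<open>AM-GM applied to the weights 1/(1 + x i) and x i/(1 + x i), which sum to 1\<close>
  have "(1 / P) powr (1 / n) + (X / P) powr (1 / n)
      \<le> (\<Sum>i\<in>S. (1 / (1 + x i)) / n) + (\<Sum>i\<in>S. (x i / (1 + x i)) / n)"
    using arith_geom_mean[OF S, of "\<lambda>i. 1 / (1 + x i)"] arith_geom_mean[OF S, of "\<lambda>i. x i / (1 + x i)"] x
    unfolding P_def X_def n_def by (simp add: prod_dividef add_mono)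
  also have "\<dots> = (\<Sum>i\<in>S. 1 / n)"
    unfolding sum.distrib[symmetric]
  proof (rule sum.cong)
    fix i assume "i \<in> S"
    then have "0 < 1 + x i" by (rule pos)
    then have "1 / (1 + x i) + x i / (1 + x i) = 1" by (simp add: add_divide_distrib[symmetric])
    then show "1 / (1 + x i) / n + x i / (1 + x i) / n = 1 / n" by (metis add_divide_distrib)
  qed simp
  also have "\<dots> = 1" using n by (simp add: n_def)
  finally have "(1 + X powr (1 / n)) / P powr (1 / n) \<le> 1"
    using P X by (simp add: powr_divide add_divide_distrib)
  then have "(1 + X powr (1 / n)) ^ n \<le> (P powr (1 / n)) ^ n"
    using P by (intro power_mono) simp_all
  also have "(P powr (1 / n)) ^ n = P"
    using P n by (simp add: powr_realpow[symmetric] powr_powr)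
  finally show ?thesis unfolding n_def X_def P_def .
qed

lemma prod_one_plus_ge_of_sum_powr_le:
  fixes lm :: "nat \<Rightarrow> real"
  assumes k: "1 \<le> k" and lm: "\<And>j. j < k \<Longrightarrow> 0 < lm j" and b: "0 < b" and q: "0 < q"
    and sum: "(\<Sum>j<k. lm j powr (- q)) \<le> D"
  shows "(1 + b * (real k / D) powr (1 / q)) ^ k \<le> (\<Prod>j<k. 1 + b * lm j)"
proof -
  have kpos: "0 < real k" using k by simp
  have ne: "{..<k} \<noteq> {}" using k by (simp add: lessThan_empty_iff)
  define G where "G = (\<Prod>j<k. lm j) powr (1 / k)"
  have G: "0 < G" unfolding G_def using lm by (simp add: less_imp_neq[symmetric])
  have "G powr (- q) = (\<Prod>j<k. lm j powr (- q)) powr (1 / k)"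
    unfolding G_def by (simp add: prod_powr_distrib powr_powr mult.commute)
  also have "\<dots> \<le> (\<Sum>j<k. lm j powr (- q)) / k"
    using arith_geom_mean[OF _ ne, of "\<lambda>j. lm j powr (- q)"] by (simp add: sum_divide_distrib)
  also have "\<dots> \<le> D / k" using sum kpos by (simp add: divide_right_mono)
  finally have "G powr (- q) \<le> D / k" .
  then have "(D / k) powr (- (1 / q)) \<le> (G powr (- q)) powr (- (1 / q))"
    using q G by (intro powr_mono2') auto
  then have Gge: "(real k / D) powr (1 / q) \<le> G"
    using q G by (simp add: powr_powr powr_minus_divide powr_divide)
  have "(\<Prod>j<k. b * lm j) powr (1 / k) = (b powr real k) powr (1 / k) * G"
    unfolding G_def using b lm by (simp add: prod.distrib powr_mult powr_realpow prod_pos)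
  also have "\<dots> = b * G" using b kpos by (simp add: powr_powr)
  finally have "(1 + b * G) ^ k \<le> (\<Prod>j<k. 1 + b * lm j)"
    using one_plus_geometric_mean_power_le_prod[of "{..<k}" "\<lambda>j. b * lm j"] ne b lm
    by (simp add: less_imp_le)
  moreover have "(1 + b * (real k / D) powr (1 / q)) ^ k \<le> (1 + b * G) ^ k"
    using Gge b by (intro power_mono) auto
  ultimately show ?thesis by linarith
qed

lemma large_step_sq_div_ge:
  fixes lm th r p :: real
  assumes lm: "0 < lm" and th: "0 < th" and r: "0 \<le> r" and p: "1 < p"
    and large: "th \<le> lm * r powr (p - 1)"
  shows "th powr (2 / (p - 1)) * lm powr (- ((p + 1) / (p - 1))) \<le> r\<^sup>2 / lm"
proof -
  have "0 < r" using large th p r by (cases "r = 0") auto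
  have "th / lm \<le> r powr (p - 1)" using large lm by (simp add: divide_le_eq mult.commute)
  then have "(th / lm) powr (2 / (p - 1)) \<le> (r powr (p - 1)) powr (2 / (p - 1))"
    using th lm p by (intro powr_mono2) auto
  also have "\<dots> = r powr ((p - 1) * (2 / (p - 1)))" by (simp add: powr_powr)
  also have "(p - 1) * (2 / (p - 1)) = 2" using p by (simp add: field_simps)
  also have "r powr 2 = r\<^sup>2" using r by simp
  finally have le: "th powr (2 / (p - 1)) / lm powr (2 / (p - 1)) \<le> r\<^sup>2"
    using th lm by (simp add: powr_divide)
  have "lm powr (2 / (p - 1)) * lm = lm powr (2 / (p - 1) + 1)"
    using lm by (simp add: powr_add)
  also have "2 / (p - 1) + 1 = (p + 1) / (p - 1)" using p by (simp add: field_simps)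
  finally have "th powr (2 / (p - 1)) * lm powr (- ((p + 1) / (p - 1)))
      = th powr (2 / (p - 1)) / (lm powr (2 / (p - 1)) * lm)"
    by (simp add: powr_minus divide_inverse)
  also have "\<dots> \<le> r\<^sup>2 / lm" using le lm by (simp add: divide_le_eq field_simps)
  finally show ?thesis .
qed

lemma large_step_lam_ge:
  fixes lm th r p K :: real
  assumes lm: "0 < lm" and th: "0 < th" and r: "0 \<le> r" and p: "1 < p" and K: "0 < K"
    and rK: "r\<^sup>2 \<le> lm * K" and large: "th \<le> lm * r powr (p - 1)"
  shows "th powr (2 / (p + 1)) * K powr (- ((p - 1) / (p + 1))) \<le> lm"
proof -
  have "r = (r\<^sup>2) powr (1 / 2)" using r by (simp add: powr_half_sqrt)
  then have "r powr (p - 1) = (r\<^sup>2) powr ((p - 1) / 2)"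
    by (metis powr_powr times_divide_eq_left mult_1)
  also have "\<dots> \<le> (lm * K) powr ((p - 1) / 2)" using rK p by (intro powr_mono2) auto
  also have "\<dots> = lm powr ((p - 1) / 2) * K powr ((p - 1) / 2)" using lm K by (simp add: powr_mult)
  finally have "th \<le> lm * lm powr ((p - 1) / 2) * K powr ((p - 1) / 2)"
    using large lm by (simp add: mult.assoc order_trans)
  also have "lm * lm powr ((p - 1) / 2) = lm powr (1 + (p - 1) / 2)"
    using lm by (simp add: powr_add)
  also have "1 + (p - 1) / 2 = (p + 1) / 2" by (simp add: field_simps)
  finally have "th * K powr (- ((p - 1) / 2)) \<le> lm powr ((p + 1) / 2)"
    using K by (simp add: powr_minus divide_le_eq field_simps)
  then have "(th * K powr (- ((p - 1) / 2))) powr (2 / (p + 1)) \<le> (lm powr ((p + 1) / 2)) powr (2 / (p + 1))"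
    using th K p by (intro powr_mono2) auto
  also have "\<dots> = lm powr ((p + 1) / 2 * (2 / (p + 1)))" by (rule powr_powr)
  also have "(p + 1) / 2 * (2 / (p + 1)) = 1" using p by (simp add: field_simps)
  also have "lm powr 1 = lm" using lm by simp
  also have "(th * K powr (- ((p - 1) / 2))) powr (2 / (p + 1))
      = th powr (2 / (p + 1)) * K powr (- ((p - 1) / (p + 1)))"
  proof -
    have "- ((p - 1) / 2) * (2 / (p + 1)) = - ((p - 1) / (p + 1))" using p by (simp add: field_simps)
    then show ?thesis using th K by (simp add: powr_mult powr_powr)
  qed
  finally show ?thesis .
qed

lemma one_plus_sqrt_div_antimono:
  fixes lm L \<sigma> \<mu> :: real
  assumes L: "0 < L" "L \<le> lm" and "0 \<le> \<sigma>" "0 \<le> \<mu>"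
  shows "(1 + \<sigma> * sqrt (1 + lm * \<mu>)) / lm \<le> (1 + \<sigma> * sqrt (1 + L * \<mu>)) / L"
proof -
  have "L\<^sup>2 * (1 + lm * \<mu>) \<le> lm\<^sup>2 * (1 + L * \<mu>)"
  proof -
    have "L\<^sup>2 \<le> lm\<^sup>2" using L by (simp add: power_mono)
    moreover have "L * L * lm * \<mu> \<le> lm * lm * L * \<mu>"
      using L assms(4) by (intro mult_right_mono) (simp_all add: mult.commute mult_right_mono)
    ultimately show ?thesis by (simp add: power2_eq_square algebra_simps)
  qed
  then have "sqrt ((1 + lm * \<mu>) / lm\<^sup>2) \<le> sqrt ((1 + L * \<mu>) / L\<^sup>2)"
    using L by (simp add: divide_simps mult.commute)
  then have "sqrt (1 + lm * \<mu>) / lm \<le> sqrt (1 + L * \<mu>) / L" using L by (simp add: real_sqrt_divide)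
  moreover have "1 / lm \<le> 1 / L" using L by (simp add: frac_le)
  moreover have "\<sigma> * (sqrt (1 + lm * \<mu>) / lm) \<le> \<sigma> * (sqrt (1 + L * \<mu>) / L)"
    using calculation(1) assms(3) by (rule mult_left_mono)
  ultimately show ?thesis by (simp add: add_divide_distrib)
qed

section \<open>The estimate sequence of Algorithm 2\<close>

locale algorithm2_iterates =
  fixes f g :: "'a::euclidean_space \<Rightarrow> ereal" and \<mu> \<sigma> p \<theta> :: real
    and lam a A eps :: "nat \<Rightarrow> real" and x xt y v :: "nat \<Rightarrow> 'a" and xs :: 'a
  assumes proper_f: "proper_fun f" and proper_g: "proper_fun g" and convex_f: "convex_fun f"
    and mu_pos: "0 < \<mu>" and strongly_convex_g: "strongly_convex_fun \<mu> g"
    and minimizer: "\<forall>z. f xs + g xs \<le> f z + g z"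
    and alg: "algorithm2 f g \<mu> \<sigma> p \<theta> lam a A x xt y v eps"
begin

lemma sigma_nonneg: "0 \<le> \<sigma>" and sigma_less_1: "\<sigma> < 1" and p_ge_2: "2 \<le> p"
  and theta_pos: "0 < \<theta>" and A_0: "A 0 = 0"
  using alg unfolding algorithm2_def by auto

lemma lam_pos: "0 < lam (Suc k)"
  and a_Suc: "a (Suc k) = ((1 + 2 * \<mu> * A k) * lam (Suc k)
              + sqrt (((1 + 2 * \<mu> * A k) * lam (Suc k))\<^sup>2
                      + 4 * (1 + \<mu> * A k) * A k * lam (Suc k))) / 2"
  and xt_eq: "xt k = ((a (Suc k) - \<mu> * A k * lam (Suc k)) / (A k + a (Suc k))) *\<^sub>R x k
              + ((A k + \<mu> * A k * lam (Suc k)) / (A k + a (Suc k))) *\<^sub>R y k"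
  and eps_nonneg: "0 \<le> eps (Suc k)"
  and v_mem: "v (Suc k) \<in> set_plus_vec (eps_subdiff (eps (Suc k)) f (y (Suc k))) (subdiff g (y (Suc k)))"
  and hpe_error: "(norm (lam (Suc k) *\<^sub>R v (Suc k) + y (Suc k) - xt k))\<^sup>2 / (1 + lam (Suc k) * \<mu>)
            + 2 * lam (Suc k) * eps (Suc k) \<le> \<sigma>\<^sup>2 * (norm (y (Suc k) - xt k))\<^sup>2"
  and large_step: "\<theta> \<le> lam (Suc k) * norm (y (Suc k) - xt k) powr (p - 1)"
  and A_Suc: "A (Suc k) = A k + a (Suc k)"
  and x_Suc: "x (Suc k) = ((1 + \<mu> * A k) / (1 + \<mu> * A (Suc k))) *\<^sub>R x k
              + (\<mu> * a (Suc k) / (1 + \<mu> * A (Suc k))) *\<^sub>R y (Suc k)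
              - (a (Suc k) / (1 + \<mu> * A (Suc k))) *\<^sub>R v (Suc k)"
  using alg unfolding algorithm2_def by blast+

lemma a_Suc_root:
  assumes "0 \<le> A k"
  shows "(1 + 2 * \<mu> * A k) * lam (Suc k) \<le> a (Suc k)"
    and "(a (Suc k))\<^sup>2 = lam (Suc k) * (a (Suc k) * (1 + 2 * \<mu> * A k) + A k * (1 + \<mu> * A k))"
proof -
  have "0 \<le> (1 + 2 * \<mu> * A k) * lam (Suc k)" "0 \<le> 4 * (1 + \<mu> * A k) * A k * lam (Suc k)"
    using assms mu_pos lam_pos[of k] by simp_all
  from positive_root_quadratic[OF this a_Suc]
  show "(1 + 2 * \<mu> * A k) * lam (Suc k) \<le> a (Suc k)"
    and "(a (Suc k))\<^sup>2 = lam (Suc k) * (a (Suc k) * (1 + 2 * \<mu> * A k) + A k * (1 + \<mu> * A k))"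
    by (simp_all add: algebra_simps)
qed

lemma A_nonneg: "0 \<le> A k"
proof (induction k)
  case (Suc k)
  have "0 \<le> (1 + 2 * \<mu> * A k) * lam (Suc k)" using Suc mu_pos lam_pos[of k] by simp
  then show ?case using a_Suc_root(1)[OF Suc] A_Suc[of k] Suc by linarith
qed (simp add: A_0)

lemmas a_ge = a_Suc_root(1)[OF A_nonneg] and a_sq = a_Suc_root(2)[OF A_nonneg]

lemma a_pos: "0 < a (Suc k)"
proof -
  have "0 < (1 + 2 * \<mu> * A k) * lam (Suc k)"
    using A_nonneg[of k] mu_pos lam_pos[of k] by (simp add: add_pos_nonneg)
  then show ?thesis using a_ge[of k] by linarith
qed

lemma mu_A_lam_le_a: "\<mu> * A k * lam (Suc k) \<le> a (Suc k)"
proof -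
  have "\<mu> * A k * lam (Suc k) \<le> (1 + 2 * \<mu> * A k) * lam (Suc k)"
    using A_nonneg[of k] mu_pos lam_pos[of k] by (simp add: algebra_simps)
  then show ?thesis using a_ge[of k] by linarith
qed

lemma A_eq_sum: "A k = (\<Sum>j<k. a (Suc j))"
  by (induction k) (simp_all add: A_0 A_Suc)

lemma A_1: "A 1 = lam 1"
  using a_Suc[of 0] lam_pos[of 0] A_0 A_Suc[of 0] by simp

lemma A_ge_lam_1: "lam 1 \<le> A (Suc k)"
proof (induction k)
  case (Suc k)
  then show ?case using A_Suc[of "Suc k"] a_pos[of "Suc k"] by simp
qed (use A_1 in simp)

lemma A_Suc_ge_prod: "lam 1 * (\<Prod>j<k. 1 + 2 * \<mu> * lam (Suc (Suc j))) \<le> A (Suc k)"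
proof (induction k)
  case (Suc k)
  have "A (Suc k) * (1 + 2 * \<mu> * lam (Suc (Suc k))) \<le> A (Suc (Suc k))"
    using a_ge[of "Suc k"] A_Suc[of "Suc k"] A_nonneg[of "Suc k"] mu_pos lam_pos[of "Suc k"]
    by (simp add: algebra_simps)
  moreover have "0 \<le> 1 + 2 * \<mu> * lam (Suc (Suc k))" using mu_pos lam_pos[of "Suc k"] by simp
  ultimately show ?case using mult_right_mono[OF Suc] by (simp add: mult.assoc) (meson order_trans)
qed (use A_1 in simp)

definition h_at :: "nat \<Rightarrow> real" where
  "h_at j = real_of_ereal (f (y j)) + real_of_ereal (g (y j))"

definition h_min :: real where
  "h_min = real_of_ereal (f xs) + real_of_ereal (g xs)"

definition model :: "nat \<Rightarrow> 'a \<Rightarrow> real" where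
  "model k z = h_at (Suc k) + inner (v (Suc k)) (z - y (Suc k)) - eps (Suc k)
     + \<mu>/2 * (norm (z - y (Suc k)))\<^sup>2"

definition psi :: "nat \<Rightarrow> 'a \<Rightarrow> real" where
  "psi k z = 1/2 * (norm (z - x 0))\<^sup>2 + (\<Sum>j<k. a (Suc j) * model j z)"

definition slack :: "nat \<Rightarrow> real" where
  "slack j = A (Suc j) * (1 - \<sigma>\<^sup>2) / (2 * lam (Suc j)) * (norm (y (Suc j) - xt j))\<^sup>2"

lemma model_le_h: "ereal (model k z) \<le> f z + g z"
  and h_at_eq: "f (y (Suc k)) + g (y (Suc k)) = ereal (h_at (Suc k))"
proof -
  obtain u w where uw: "v (Suc k) = u + w" "u \<in> eps_subdiff (eps (Suc k)) f (y (Suc k))"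
      "w \<in> subdiff g (y (Suc k))"
    using v_mem[of k] unfolding set_plus_vec_def by blast
  define fy where "fy = real_of_ereal (f (y (Suc k)))"
  define gy where "gy = real_of_ereal (g (y (Suc k)))"
  have fy: "f (y (Suc k)) = ereal fy"
    using eps_subdiff_finite[OF proper_f uw(2)] by (simp add: fy_def)
  have gy: "g (y (Suc k)) = ereal gy"
    using eps_subdiff_finite[OF proper_g uw(3)[unfolded subdiff_def]] by (simp add: gy_def)
  have h: "h_at (Suc k) = fy + gy" unfolding h_at_def fy_def gy_def ..
  then show "f (y (Suc k)) + g (y (Suc k)) = ereal (h_at (Suc k))" using fy gy by simp
  have "ereal (fy + inner u (z - y (Suc k)) - eps (Suc k)) \<le> f z"
    using uw(2) fy unfolding eps_subdiff_def by auto
  moreover have "ereal (gy + inner w (z - y (Suc k)) + \<mu>/2 * (norm (z - y (Suc k)))\<^sup>2) \<le> g z"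
    by (rule strongly_convex_subgradient_ineq[OF proper_g strongly_convex_g uw(3) gy])
  ultimately have "ereal (fy + inner u (z - y (Suc k)) - eps (Suc k))
      + ereal (gy + inner w (z - y (Suc k)) + \<mu>/2 * (norm (z - y (Suc k)))\<^sup>2) \<le> f z + g z"
    by (rule add_mono)
  then show "ereal (model k z) \<le> f z + g z"
    unfolding model_def h uw(1) by (simp add: inner_add_left algebra_simps)
qed

lemma h_min_finite: "f xs = ereal (real_of_ereal (f xs))" "g xs = ereal (real_of_ereal (g xs))"
  and h_min_eq: "f xs + g xs = ereal h_min"
proof -
  have le: "f xs + g xs \<le> ereal (h_at 1)" using minimizer h_at_eq[of 0] by (metis One_nat_def)
  have "f xs \<noteq> -\<infinity>" "g xs \<noteq> -\<infinity>" using proper_f proper_g unfolding proper_fun_def by auto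
  moreover from this have "f xs \<noteq> \<infinity>" "g xs \<noteq> \<infinity>" using le by auto
  ultimately show "f xs = ereal (real_of_ereal (f xs))" "g xs = ereal (real_of_ereal (g xs))"
    by (cases "f xs"; simp; cases "g xs"; simp)+
  then show "f xs + g xs = ereal h_min" unfolding h_min_def by (metis plus_ereal.simps(1))
qed

lemma h_min_le: "h_min \<le> h_at (Suc k)"
  using minimizer h_at_eq[of k] h_min_eq by (metis ereal_less_eq(3))

lemma model_le_h_min: "model k xs \<le> h_min"
  using model_le_h[of k xs] h_min_eq by simp

lemma model_le_h_at: "model k (y (Suc j)) \<le> h_at (Suc j)"
  using model_le_h[of k "y (Suc j)"] h_at_eq[of j] by simp

text \<open>This is where the update rule for \<open>x\<close> enters.\<close>

lemma psi_eq_min_plus_sq: "psi k z = psi k (x k) + (1 + \<mu> * A k) / 2 * (norm (z - x k))\<^sup>2"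
proof (induction k arbitrary: z)
  case 0
  then show ?case by (simp add: psi_def A_0)
next
  case (Suc k)
  define \<alpha> where "\<alpha> = 1 + \<mu> * A k"
  define \<beta> where "\<beta> = \<mu> * a (Suc k)"
  define c where "c = psi k (x k) + a (Suc k) * (h_at (Suc k) - inner (v (Suc k)) (y (Suc k)) - eps (Suc k))"
  define E where "E z = \<alpha>/2 * (norm (z - x k))\<^sup>2 + \<beta>/2 * (norm (z - y (Suc k)))\<^sup>2
                         + inner (a (Suc k) *\<^sub>R v (Suc k)) z" for z
  have psi_Suc: "psi (Suc k) z = c + E z" for z
  proof -
    have "psi (Suc k) z = psi k z + a (Suc k) * model k z" by (simp add: psi_def)
    also have "\<dots> = c + E z" unfolding Suc.IH[of z] c_def E_def \<alpha>_def \<beta>_def model_def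
      by (simp add: inner_diff_right algebra_simps)
    finally show ?thesis .
  qed
  have pos: "0 < 1 + \<mu> * A (Suc k)" using A_nonneg[of "Suc k"] mu_pos by (simp add: add_pos_nonneg)
  have sum: "\<alpha> + \<beta> = 1 + \<mu> * A (Suc k)" unfolding \<alpha>_def \<beta>_def by (simp add: A_Suc algebra_simps)
  have "(\<alpha> + \<beta>) *\<^sub>R x (Suc k) = \<alpha> *\<^sub>R x k + \<beta> *\<^sub>R y (Suc k) - a (Suc k) *\<^sub>R v (Suc k)"
    unfolding sum x_Suc[of k] using pos by (simp add: \<alpha>_def \<beta>_def scaleR_add_right scaleR_diff_right)
  then have "E z = E (x (Suc k)) + (\<alpha> + \<beta>)/2 * (norm (z - x (Suc k)))\<^sup>2"
    unfolding E_def by (rule sum_quadratics_recentre)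
  then show ?case using psi_Suc[of z] psi_Suc[of "x (Suc k)"] sum by simp
qed

lemma slack_nonneg: "0 \<le> slack j"
proof -
  have "\<sigma>\<^sup>2 \<le> 1" using sigma_nonneg sigma_less_1 by (simp add: power_le_one)
  then show ?thesis using A_nonneg[of "Suc j"] lam_pos[of j] by (simp add: slack_def)
qed

lemma estimate_invariant_step:
  assumes "A k * model k (y k) + (\<Sum>j<k. slack j) \<le> psi k (x k)"
  shows "A (Suc k) * h_at (Suc k) + (\<Sum>j<Suc k. slack j) \<le> psi (Suc k) (x (Suc k))"
proof -
  have "slack k
      \<le> A k * (inner (v (Suc k)) (y k - y (Suc k)) - eps (Suc k) + \<mu>/2 * (norm (y k - y (Suc k)))\<^sup>2)
       + a (Suc k) * (inner (v (Suc k)) (x (Suc k) - y (Suc k)) - eps (Suc k)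
                      + \<mu>/2 * (norm (x (Suc k) - y (Suc k)))\<^sup>2)
       + (1 + \<mu> * A k) / 2 * (norm (x (Suc k) - x k))\<^sup>2"
    unfolding slack_def
    by (rule estimate_sequence_step[OF A_nonneg a_pos lam_pos less_imp_le[OF mu_pos] mu_A_lam_le_a a_sq
          A_Suc xt_eq[of k, folded A_Suc] hpe_error])
  moreover have "psi (Suc k) (x (Suc k)) = psi k (x k) + (1 + \<mu> * A k) / 2 * (norm (x (Suc k) - x k))\<^sup>2
      + a (Suc k) * model k (x (Suc k))"
    using psi_eq_min_plus_sq[of k "x (Suc k)"] by (simp add: psi_def)
  moreover have "A k * model k (y k) + a (Suc k) * model k (x (Suc k))
      = A (Suc k) * h_at (Suc k)
        + A k * (inner (v (Suc k)) (y k - y (Suc k)) - eps (Suc k) + \<mu>/2 * (norm (y k - y (Suc k)))\<^sup>2)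
        + a (Suc k) * (inner (v (Suc k)) (x (Suc k) - y (Suc k)) - eps (Suc k)
                       + \<mu>/2 * (norm (x (Suc k) - y (Suc k)))\<^sup>2)"
    unfolding model_def A_Suc by (simp add: algebra_simps)
  ultimately show ?thesis using assms by simp
qed

lemma estimate_invariant: "A (Suc k) * h_at (Suc k) + (\<Sum>j<Suc k. slack j) \<le> psi (Suc k) (x (Suc k))"
proof (induction k)
  case 0
  show ?case by (rule estimate_invariant_step) (simp add: A_0 psi_def)
next
  case (Suc k)
  have "A (Suc k) * model (Suc k) (y (Suc k)) \<le> A (Suc k) * h_at (Suc k)"
    using model_le_h_at A_nonneg by (simp add: mult_left_mono)
  then show ?case using Suc.IH by (intro estimate_invariant_step) linarith
qed

lemma psi_at_min_le: "psi k xs \<le> (norm (x 0 - xs))\<^sup>2 / 2 + A k * h_min"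
proof -
  have "(\<Sum>j<k. a (Suc j) * model j xs) \<le> (\<Sum>j<k. a (Suc j) * h_min)"
    using model_le_h_min a_pos by (intro sum_mono mult_left_mono) (auto simp: less_imp_le)
  also have "\<dots> = A k * h_min" by (simp add: A_eq_sum sum_distrib_right)
  finally show ?thesis unfolding psi_def by (simp add: norm_minus_commute)
qed

lemma potential_le:
  "A (Suc k) * (h_at (Suc k) - h_min) + (1 + \<mu> * A (Suc k)) / 2 * (norm (xs - x (Suc k)))\<^sup>2
     + (\<Sum>j<Suc k. slack j) \<le> (norm (x 0 - xs))\<^sup>2 / 2"
  using estimate_invariant[of k] psi_at_min_le[of "Suc k"] psi_eq_min_plus_sq[of "Suc k" xs]
    right_diff_distrib[of "A (Suc k)" "h_at (Suc k)" h_min]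
  by linarith

end

section \<open>Convergence rates\<close>

locale algorithm2_rates = algorithm2_iterates +
  fixes d0 C :: real and Q :: "nat \<Rightarrow> real"
  assumes d0_pos: "0 < d0" and d0_eq: "d0 = norm (x 0 - xs)"
    and C_eq: "C = lam 1 powr ((p - 1) / (p + 1)) * \<theta> powr (2 / (p + 1))
               * (1 - \<sigma>\<^sup>2) powr ((p - 1) / (p + 1))"
    and Q_eq: "Q = (\<lambda>m::nat. (1 + 2 * \<mu> * C / d0 powr (2 * (p - 1) / (p + 1))
               * real m powr ((p - 1) / (p + 1))) ^ m)"
begin

definition L :: real where "L = C / d0 powr (2 * (p - 1) / (p + 1))"

lemma one_minus_sigma_sq_pos: "0 < 1 - \<sigma>\<^sup>2"
  using sigma_nonneg sigma_less_1 by (simp add: power_less_one_iff abs_less_iff)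

lemma lam_1_pos: "0 < lam 1" using lam_pos[of 0] by simp

lemma C_pos: "0 < C" unfolding C_eq using lam_1_pos theta_pos one_minus_sigma_sq_pos by simp

lemma L_pos: "0 < L" unfolding L_def using C_pos d0_pos by simp

lemma Q_eq_L: "Q m = (1 + 2 * \<mu> * L * real m powr ((p - 1) / (p + 1))) ^ m"
  unfolding Q_eq L_def by simp

lemma Q_pos: "0 < Q m"
  unfolding Q_eq_L using mu_pos L_pos by (simp add: add_pos_nonneg)

lemma Q_mono: "Q m \<le> Q (Suc m)"
proof -
  define b where "b m = 1 + 2 * \<mu> * L * real m powr ((p - 1) / (p + 1))" for m :: nat
  have b1: "1 \<le> b m" unfolding b_def using mu_pos L_pos by simp
  have bm: "b m \<le> b (Suc m)" unfolding b_def using mu_pos L_pos p_ge_2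
    by (intro add_left_mono mult_left_mono powr_mono2) auto
  have "b m ^ m \<le> b (Suc m) ^ m" using bm b1 by (intro power_mono) auto
  also have "\<dots> \<le> b (Suc m) ^ Suc m" using bm b1 by (intro power_increasing) auto
  finally show ?thesis unfolding Q_eq_L b_def .
qed

lemma slack_sum_le: "(\<Sum>j<Suc k. slack j) \<le> d0\<^sup>2 / 2"
proof -
  have "0 \<le> A (Suc k) * (h_at (Suc k) - h_min)" using A_nonneg h_min_le by simp
  moreover have "0 \<le> (1 + \<mu> * A (Suc k)) / 2 * (norm (xs - x (Suc k)))\<^sup>2"
    using A_nonneg[of "Suc k"] mu_pos by (simp add: add_nonneg_nonneg)
  ultimately show ?thesis using potential_le[of k] unfolding d0_eq by linarith
qed

lemma slack_le: "slack k \<le> d0\<^sup>2 / 2"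
  using member_le_sum[of k "{..<Suc k}" slack] slack_nonneg slack_sum_le[of k] by simp

lemma slack_ge:
  "lam 1 * (1 - \<sigma>\<^sup>2) / 2 * (\<theta> powr (2 / (p - 1)) * lam (Suc j) powr (- ((p + 1) / (p - 1))))
     \<le> slack j"
proof -
  have "\<theta> powr (2 / (p - 1)) * lam (Suc j) powr (- ((p + 1) / (p - 1)))
      \<le> (norm (y (Suc j) - xt j))\<^sup>2 / lam (Suc j)"
    using large_step_sq_div_ge[OF lam_pos theta_pos norm_ge_zero _ large_step] p_ge_2 by simp
  moreover have "lam 1 * (1 - \<sigma>\<^sup>2) / 2 \<le> A (Suc j) * (1 - \<sigma>\<^sup>2) / 2"
    using A_ge_lam_1[of j] one_minus_sigma_sq_pos by (simp add: divide_right_mono)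
  ultimately have "lam 1 * (1 - \<sigma>\<^sup>2) / 2 * (\<theta> powr (2 / (p - 1)) * lam (Suc j) powr (- ((p + 1) / (p - 1))))
      \<le> A (Suc j) * (1 - \<sigma>\<^sup>2) / 2 * ((norm (y (Suc j) - xt j))\<^sup>2 / lam (Suc j))"
    using one_minus_sigma_sq_pos lam_1_pos by (intro mult_mono) auto
  also have "\<dots> = slack j" unfolding slack_def by (simp add: field_simps)
  finally show ?thesis .
qed

lemma sum_lam_powr_le:
  "(\<Sum>j<k. lam (Suc (Suc j)) powr (- ((p + 1) / (p - 1))))
     \<le> d0\<^sup>2 / (lam 1 * (1 - \<sigma>\<^sup>2) * \<theta> powr (2 / (p - 1)))"
proof -
  define c where "c = lam 1 * (1 - \<sigma>\<^sup>2) / 2 * \<theta> powr (2 / (p - 1))"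
  have c: "0 < c" unfolding c_def using one_minus_sigma_sq_pos lam_1_pos theta_pos by simp
  have "c * (\<Sum>j<k. lam (Suc (Suc j)) powr (- ((p + 1) / (p - 1))))
      = (\<Sum>j<k. c * lam (Suc (Suc j)) powr (- ((p + 1) / (p - 1))))"
    by (simp add: sum_distrib_left)
  also have "\<dots> \<le> (\<Sum>j<k. slack (Suc j))"
    using slack_ge unfolding c_def by (intro sum_mono) (simp add: mult.assoc)
  also have "\<dots> \<le> slack 0 + (\<Sum>j<k. slack (Suc j))" using slack_nonneg[of 0] by simp
  also have "\<dots> = (\<Sum>j<Suc k. slack j)" by (rule sum.lessThan_Suc_shift[symmetric])
  also have "\<dots> \<le> d0\<^sup>2 / 2" by (rule slack_sum_le)
  finally show ?thesis using c unfolding c_def by (simp add: field_simps)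
qed

lemma powr_L_eq:
  assumes "0 < K" "K = d0\<^sup>2 / (lam 1 * (1 - \<sigma>\<^sup>2))"
  shows "\<theta> powr (2 / (p + 1)) * K powr (- ((p - 1) / (p + 1))) = L"
proof -
  define s where "s = (p - 1) / (p + 1)"
  have "(d0\<^sup>2) powr s = (d0 powr 2) powr s" using d0_pos by (simp add: powr_numeral)
  also have "\<dots> = d0 powr (2 * (p - 1) / (p + 1))" unfolding s_def by (simp add: powr_powr)
  finally have "(d0\<^sup>2) powr s = d0 powr (2 * (p - 1) / (p + 1))" .
  then have "K powr (- s) = (lam 1 powr s * (1 - \<sigma>\<^sup>2) powr s) / d0 powr (2 * (p - 1) / (p + 1))"
    using assms lam_1_pos one_minus_sigma_sq_pos
    by (simp add: powr_minus_divide powr_divide powr_mult)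
  then show ?thesis unfolding L_def unfolding C_eq s_def by (simp add: field_simps)
qed

lemma lam_1_Q_le_A: "lam 1 * Q k \<le> A (Suc k)"
proof (cases "k = 0")
  case True then show ?thesis using A_1 by (simp add: Q_eq_L)
next
  case False
  define K where "K = d0\<^sup>2 / (lam 1 * (1 - \<sigma>\<^sup>2))"
  define D where "D = K / \<theta> powr (2 / (p - 1))"
  have K: "0 < K" unfolding K_def using d0_pos lam_1_pos one_minus_sigma_sq_pos by simp
  have q: "0 < (p + 1) / (p - 1)" using p_ge_2 by simp
  have "(1 + 2 * \<mu> * (real k / D) powr (1 / ((p + 1) / (p - 1)))) ^ k
      \<le> (\<Prod>j<k. 1 + 2 * \<mu> * lam (Suc (Suc j)))"
    using sum_lam_powr_le[of k] False lam_pos mu_pos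
    by (intro prod_one_plus_ge_of_sum_powr_le[OF _ _ _ q]) (simp_all add: D_def K_def)
  also have "(real k / D) powr (1 / ((p + 1) / (p - 1))) = L * real k powr ((p - 1) / (p + 1))"
  proof -
    have "2 / (p - 1) * ((p - 1) / (p + 1)) = 2 / (p + 1)" using p_ge_2 by (simp add: divide_simps)
    then have "(\<theta> powr (2 / (p - 1))) powr ((p - 1) / (p + 1)) = \<theta> powr (2 / (p + 1))"
      by (metis powr_powr)
    then show ?thesis
      using powr_L_eq[OF K K_def] K theta_pos
      by (simp add: D_def powr_divide powr_mult powr_minus_divide field_simps)
  qed
  finally have "Q k \<le> (\<Prod>j<k. 1 + 2 * \<mu> * lam (Suc (Suc j)))"
    unfolding Q_eq_L by (simp add: mult.assoc)
  then have "lam 1 * Q k \<le> lam 1 * (\<Prod>j<k. 1 + 2 * \<mu> * lam (Suc (Suc j)))"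
    using lam_1_pos by simp
  also have "\<dots> \<le> A (Suc k)" by (rule A_Suc_ge_prod)
  finally show ?thesis .
qed

definition dist_bound :: "nat \<Rightarrow> real" where
  "dist_bound m = d0\<^sup>2 / (\<mu> * lam 1 * Q m)"

lemma slack_sum_nonneg: "0 \<le> (\<Sum>j<k. slack j)"
  by (rule sum_nonneg) (rule slack_nonneg)

lemma A_Suc_pos: "0 < A (Suc k)"
  using lam_1_Q_le_A[of k] lam_1_pos Q_pos[of k] by (smt (verit) mult_pos_pos)

lemma h_gap_le: "h_at (Suc k) - h_min \<le> d0\<^sup>2 / (2 * lam 1 * Q k)"
proof -
  have "0 \<le> (1 + \<mu> * A (Suc k)) / 2 * (norm (xs - x (Suc k)))\<^sup>2"
    using A_nonneg[of "Suc k"] mu_pos by (simp add: add_nonneg_nonneg)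
  then have "A (Suc k) * (h_at (Suc k) - h_min) \<le> d0\<^sup>2 / 2"
    using potential_le[of k] slack_sum_nonneg[of "Suc k"] unfolding d0_eq by linarith
  then have "h_at (Suc k) - h_min \<le> d0\<^sup>2 / 2 / A (Suc k)"
    using A_Suc_pos[of k] by (simp add: le_divide_eq mult.commute)
  also have "\<dots> \<le> d0\<^sup>2 / 2 / (lam 1 * Q k)"
    using lam_1_Q_le_A[of k] lam_1_pos Q_pos[of k] A_Suc_pos[of k] by (intro divide_left_mono) auto
  finally show ?thesis by simp
qed

lemma x_dist_le: "(norm (xs - x (Suc k)))\<^sup>2 \<le> dist_bound k"
proof -
  have "0 \<le> A (Suc k) * (h_at (Suc k) - h_min)" using A_nonneg h_min_le by simp
  then have "(1 + \<mu> * A (Suc k)) * (norm (xs - x (Suc k)))\<^sup>2 \<le> d0\<^sup>2"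
    using potential_le[of k] slack_sum_nonneg[of "Suc k"] unfolding d0_eq by linarith
  moreover have "\<mu> * (lam 1 * Q k) \<le> 1 + \<mu> * A (Suc k)"
    using lam_1_Q_le_A[of k] mu_pos by (smt (verit) mult_left_mono)
  ultimately have "\<mu> * (lam 1 * Q k) * (norm (xs - x (Suc k)))\<^sup>2 \<le> d0\<^sup>2"
    by (meson mult_right_mono order_trans zero_le_power2)
  then show ?thesis
    unfolding dist_bound_def using mu_pos lam_1_pos Q_pos[of k] by (simp add: field_simps)
qed

lemma y_dist_le: "(norm (xs - y (Suc k)))\<^sup>2 \<le> dist_bound k"
proof -
  have fy: "f (y (Suc k)) = ereal (real_of_ereal (f (y (Suc k))))"
    and gy: "g (y (Suc k)) = ereal (real_of_ereal (g (y (Suc k))))"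
    using h_at_eq[of k] by (cases "f (y (Suc k))"; cases "g (y (Suc k))"; simp)+
  have "\<mu> / 2 * (norm (y (Suc k) - xs))\<^sup>2 \<le> h_at (Suc k) - h_min"
    using strongly_convex_sum_growth_at_min[OF proper_f proper_g convex_f strongly_convex_g fy gy
        h_min_finite minimizer]
    unfolding h_at_def h_min_def .
  also have "\<dots> \<le> d0\<^sup>2 / (2 * lam 1 * Q k)" by (rule h_gap_le)
  finally show ?thesis
    unfolding dist_bound_def using mu_pos lam_1_pos Q_pos[of k]
    by (simp add: norm_minus_commute field_simps)
qed

lemma L_le_lam: "L \<le> lam (Suc k)"
proof -
  define r where "r = norm (y (Suc k) - xt k)"
  define K where "K = d0\<^sup>2 / (lam 1 * (1 - \<sigma>\<^sup>2))"
  have K: "0 < K" unfolding K_def using d0_pos lam_1_pos one_minus_sigma_sq_pos by simp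
  have "A (Suc k) * (1 - \<sigma>\<^sup>2) / (2 * lam (Suc k)) * r\<^sup>2 \<le> d0\<^sup>2 / 2"
    using slack_le[of k] unfolding slack_def r_def .
  then have "A (Suc k) * (1 - \<sigma>\<^sup>2) * r\<^sup>2 \<le> lam (Suc k) * d0\<^sup>2"
    using lam_pos[of k] by (simp add: field_simps)
  moreover have "lam 1 * (1 - \<sigma>\<^sup>2) * r\<^sup>2 \<le> A (Suc k) * (1 - \<sigma>\<^sup>2) * r\<^sup>2"
    using A_ge_lam_1[of k] one_minus_sigma_sq_pos by (intro mult_right_mono) auto
  ultimately have "r\<^sup>2 \<le> lam (Suc k) * K"
    unfolding K_def using lam_1_pos one_minus_sigma_sq_pos by (simp add: field_simps)
  then have "\<theta> powr (2 / (p + 1)) * K powr (- ((p - 1) / (p + 1))) \<le> lam (Suc k)"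
    using large_step_lam_ge[OF lam_pos theta_pos _ _ K _ large_step] p_ge_2 by (simp add: r_def)
  then show ?thesis using powr_L_eq[OF K K_def] by simp
qed

lemma xt_dist_le: "(norm (xt (Suc m) - xs))\<^sup>2 \<le> dist_bound m"
proof -
  let ?A = "A (Suc m)" and ?a = "a (Suc (Suc m))" and ?l = "lam (Suc (Suc m))"
  define c1 where "c1 = (?a - \<mu> * ?A * ?l) / (?A + ?a)"
  define c2 where "c2 = (?A + \<mu> * ?A * ?l) / (?A + ?a)"
  have pos: "0 < ?A + ?a" using A_nonneg[of "Suc m"] a_pos[of "Suc m"] by simp
  have c12: "c1 + c2 = 1" unfolding c1_def c2_def add_divide_distrib[symmetric] using pos by simp
  have c1: "0 \<le> c1" unfolding c1_def using mu_A_lam_le_a[of "Suc m"] pos by simp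
  have c2: "0 \<le> c2" unfolding c2_def using pos A_nonneg[of "Suc m"] mu_pos lam_pos[of "Suc m"] by simp
  have "xt (Suc m) = c1 *\<^sub>R x (Suc m) + c2 *\<^sub>R y (Suc m)"
    unfolding c1_def c2_def by (rule xt_eq)
  moreover have "xs = c1 *\<^sub>R xs + c2 *\<^sub>R xs" using c12 by (metis scaleR_add_left scaleR_one)
  ultimately have "xt (Suc m) - xs = c1 *\<^sub>R (x (Suc m) - xs) + c2 *\<^sub>R (y (Suc m) - xs)"
    by (simp add: algebra_simps)
  then have "(norm (xt (Suc m) - xs))\<^sup>2
      \<le> (c1 + c2) * (c1 * (norm (x (Suc m) - xs))\<^sup>2 + c2 * (norm (y (Suc m) - xs))\<^sup>2)"
    using norm_sq_weighted_sum_le[OF c1 c2] by simp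
  also have "\<dots> \<le> c1 * dist_bound m + c2 * dist_bound m"
    using x_dist_le[of m] y_dist_le[of m] c1 c2 c12
    by (simp add: norm_minus_commute add_mono mult_left_mono)
  finally show ?thesis using c12 by (simp add: distrib_right[symmetric])
qed

lemma step_dist_le: "(norm (y (Suc (Suc m)) - xt (Suc m)))\<^sup>2 \<le> 4 * dist_bound m"
proof -
  have "dist_bound (Suc m) \<le> dist_bound m"
    unfolding dist_bound_def using Q_mono[of m] Q_pos[of m] mu_pos lam_1_pos
    by (intro divide_left_mono mult_left_mono) auto
  then have "(norm (y (Suc (Suc m)) - xs))\<^sup>2 \<le> dist_bound m"
    using y_dist_le[of "Suc m"] by (simp add: norm_minus_commute)
  moreover have "(norm (y (Suc (Suc m)) - xt (Suc m)))\<^sup>2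
      \<le> 2 * (norm (y (Suc (Suc m)) - xs))\<^sup>2 + 2 * (norm (xt (Suc m) - xs))\<^sup>2"
    using norm_sq_diff_le[of "y (Suc (Suc m)) - xs" "xt (Suc m) - xs"] by simp
  ultimately show ?thesis using xt_dist_le[of m] by simp
qed

lemma d0_sq_mult_powr: "d0\<^sup>2 * d0 powr e = d0 powr (2 + e)"
  using d0_pos by (simp add: powr_add)

lemma d0_sq_mult_P: "d0\<^sup>2 * d0 powr (2 * (p - 1) / (p + 1)) = d0 powr (4 * p / (p + 1))"
proof -
  have "2 + 2 * (p - 1) / (p + 1) = 4 * p / (p + 1)" using p_ge_2 by (simp add: divide_simps)
  then show ?thesis unfolding d0_sq_mult_powr by simp
qed

lemma d0_sq_mult_P_sq: "d0\<^sup>2 * (d0 powr (2 * (p - 1) / (p + 1)))\<^sup>2 = d0 powr (2 * (3 * p - 1) / (p + 1))"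
proof -
  have "(d0 powr (2 * (p - 1) / (p + 1)))\<^sup>2 = d0 powr (2 * (2 * (p - 1) / (p + 1)))"
    by (simp add: power2_eq_square powr_add[symmetric])
  moreover have "2 + 2 * (2 * (p - 1) / (p + 1)) = 2 * (3 * p - 1) / (p + 1)"
    using p_ge_2 by (simp add: divide_simps)
  ultimately show ?thesis by (simp only: d0_sq_mult_powr)
qed

lemma mu_C_d0_powr_eq: "\<mu> * C * d0 powr (- 2 * (p - 1) / (p + 1)) = L * \<mu>"
proof -
  have "- 2 * (p - 1) / (p + 1) = - (2 * (p - 1) / (p + 1))" by (metis minus_divide_left minus_mult_left)
  then show ?thesis unfolding L_def by (simp add: powr_minus_divide)
qed

lemma eps_le: "eps (Suc (Suc m)) \<le> 3 * \<sigma>\<^sup>2 * d0 powr (4 * p / (p + 1)) / (\<mu> * C * lam 1 * Q m)"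
proof -
  let ?l = "lam (Suc (Suc m))"
  define r where "r = norm (y (Suc (Suc m)) - xt (Suc m))"
  define P where "P = d0 powr (2 * (p - 1) / (p + 1))"
  have P: "0 < P" unfolding P_def using d0_pos by simp
  have "0 \<le> (norm (?l *\<^sub>R v (Suc (Suc m)) + y (Suc (Suc m)) - xt (Suc m)))\<^sup>2 / (1 + ?l * \<mu>)"
    using lam_pos[of "Suc m"] mu_pos by (simp add: add_pos_nonneg)
  then have "2 * ?l * eps (Suc (Suc m)) \<le> \<sigma>\<^sup>2 * r\<^sup>2"
    using hpe_error[of "Suc m"] unfolding r_def by linarith
  then have "eps (Suc (Suc m)) \<le> \<sigma>\<^sup>2 * r\<^sup>2 / (2 * ?l)"
    using lam_pos[of "Suc m"] by (simp add: field_simps)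
  also have "\<dots> \<le> \<sigma>\<^sup>2 * r\<^sup>2 / (2 * L)"
    using L_le_lam[of "Suc m"] L_pos by (intro divide_left_mono) auto
  also have "\<dots> \<le> \<sigma>\<^sup>2 * (4 * dist_bound m) / (2 * L)"
    using step_dist_le[of m] L_pos unfolding r_def by (intro divide_right_mono mult_left_mono) auto
  also have "\<dots> = 2 * \<sigma>\<^sup>2 * (d0\<^sup>2 * P) / (\<mu> * C * lam 1 * Q m)"
    unfolding dist_bound_def L_def P_def[symmetric]
    using P C_pos mu_pos lam_1_pos Q_pos[of m] by (simp add: field_simps)
  also have "d0\<^sup>2 * P = d0 powr (4 * p / (p + 1))" unfolding P_def by (rule d0_sq_mult_P)
  also have "2 * \<sigma>\<^sup>2 * d0 powr (4 * p / (p + 1)) / (\<mu> * C * lam 1 * Q m)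
      \<le> 3 * \<sigma>\<^sup>2 * d0 powr (4 * p / (p + 1)) / (\<mu> * C * lam 1 * Q m)"
    using mu_pos C_pos lam_1_pos Q_pos[of m] by (intro divide_right_mono mult_right_mono) auto
  finally show ?thesis .
qed

lemma v_norm_le:
  "(norm (v (Suc (Suc m))))\<^sup>2 \<le> (1 + \<sigma> * sqrt (1 + \<mu> * C * d0 powr (- 2 * (p - 1) / (p + 1))))\<^sup>2
     * (6 * d0 powr (2 * (3 * p - 1) / (p + 1))) / (\<mu> * C\<^sup>2 * lam 1 * Q m)"
proof -
  let ?l = "lam (Suc (Suc m))" and ?v = "v (Suc (Suc m))"
  define r where "r = y (Suc (Suc m)) - xt (Suc m)"
  define P where "P = d0 powr (2 * (p - 1) / (p + 1))"
  define Z where "Z = 1 + \<sigma> * sqrt (1 + L * \<mu>)"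
  have P: "0 < P" unfolding P_def using d0_pos by simp
  have "?l * norm ?v \<le> (1 + \<sigma> * sqrt (1 + ?l * \<mu>)) * norm r"
    unfolding r_def
    by (rule hpe_error_norm_le[OF lam_pos less_imp_le[OF mu_pos] sigma_nonneg eps_nonneg
          hpe_error[of "Suc m", unfolded add_diff_eq[symmetric]]])
  then have "norm ?v \<le> (1 + \<sigma> * sqrt (1 + ?l * \<mu>)) / ?l * norm r"
    using lam_pos[of "Suc m"] by (simp add: field_simps)
  also have "\<dots> \<le> Z / L * norm r" unfolding Z_def
    using one_plus_sqrt_div_antimono[OF L_pos L_le_lam sigma_nonneg less_imp_le[OF mu_pos]]
    by (intro mult_right_mono) auto
  finally have "(norm ?v)\<^sup>2 \<le> (Z / L)\<^sup>2 * (norm r)\<^sup>2"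
    by (simp add: power_mono power_mult_distrib[symmetric])
  also have "\<dots> \<le> (Z / L)\<^sup>2 * (4 * dist_bound m)"
    using step_dist_le[of m] unfolding r_def by (intro mult_left_mono) auto
  also have "\<dots> = 4 * Z\<^sup>2 * (d0\<^sup>2 * P\<^sup>2) / (\<mu> * C\<^sup>2 * lam 1 * Q m)"
    unfolding dist_bound_def L_def P_def[symmetric]
    using P C_pos mu_pos lam_1_pos Q_pos[of m] by (simp add: field_simps power2_eq_square)
  also have "d0\<^sup>2 * P\<^sup>2 = d0 powr (2 * (3 * p - 1) / (p + 1))" unfolding P_def by (rule d0_sq_mult_P_sq)
  also have "Z = 1 + \<sigma> * sqrt (1 + \<mu> * C * d0 powr (- 2 * (p - 1) / (p + 1)))"
    unfolding Z_def mu_C_d0_powr_eq ..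
  also have "4 * (1 + \<sigma> * sqrt (1 + \<mu> * C * d0 powr (- 2 * (p - 1) / (p + 1))))\<^sup>2
        * d0 powr (2 * (3 * p - 1) / (p + 1)) / (\<mu> * C\<^sup>2 * lam 1 * Q m)
      \<le> (1 + \<sigma> * sqrt (1 + \<mu> * C * d0 powr (- 2 * (p - 1) / (p + 1))))\<^sup>2
        * (6 * d0 powr (2 * (3 * p - 1) / (p + 1))) / (\<mu> * C\<^sup>2 * lam 1 * Q m)"
    using mu_pos C_pos lam_1_pos Q_pos[of m] by (intro divide_right_mono) auto
  finally show ?thesis .
qed

end

theorem theorem3p3:
  fixes f g :: "'a::euclidean_space \<Rightarrow> ereal"
    and \<mu> \<sigma> p \<theta> :: real
    and lam a A eps :: "nat \<Rightarrow> real"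
    and x xt y v :: "nat \<Rightarrow> 'a"
    and xstar :: 'a
    and d0 C :: real and Q :: "nat \<Rightarrow> real"
  assumes f: "proper_fun f" "closed_fun f" "convex_fun f"
    and g: "proper_fun g" "closed_fun g" "convex_fun g"
    and dom: "dom_fun (\<lambda>z. f z + g z) \<noteq> {}"
    and mu: "0 < \<mu>" "strongly_convex_fun \<mu> g"
    and xstar: "\<forall>z. f xstar + g xstar \<le> f z + g z"
    and alg: "algorithm2 f g \<mu> \<sigma> p \<theta> lam a A x xt y v eps"
    and d0pos: "norm (x 0 - xstar) > 0"
    and d0_def: "d0 = norm (x 0 - xstar)"
    and C_def: "C = lam 1 powr ((p - 1) / (p + 1)) * \<theta> powr (2 / (p + 1))
               * (1 - \<sigma>\<^sup>2) powr ((p - 1) / (p + 1))"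
    and Q_def: "Q = (\<lambda>m::nat. (1 + 2 * \<mu> * C / d0 powr (2 * (p - 1) / (p + 1))
               * real m powr ((p - 1) / (p + 1))) ^ m)"
  shows "(\<forall>k. (f (y (Suc k)) + g (y (Suc k))) - (f xstar + g xstar)
                \<le> ereal (d0\<^sup>2 / (2 * lam 1 * Q k))
            \<and> max ((norm (xstar - x (Suc k)))\<^sup>2) ((norm (xstar - y (Suc k)))\<^sup>2)
                \<le> d0\<^sup>2 / (\<mu> * lam 1 * Q k))
       \<and> (\<forall>k\<ge>1. v (Suc k) \<in> set_plus_vec (eps_subdiff (eps (Suc k)) f (y (Suc k)))
                                        (subdiff g (y (Suc k)))
            \<and> (norm (v (Suc k)))\<^sup>2
                \<le> (1 + \<sigma> * sqrt (1 + \<mu> * C * d0 powr (- 2 * (p - 1) / (p + 1))))\<^sup>2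
                   * (6 * d0 powr (2 * (3 * p - 1) / (p + 1)))
                   / (\<mu> * C\<^sup>2 * lam 1 * Q (k - 1))
            \<and> eps (Suc k) \<le> 3 * \<sigma>\<^sup>2 * d0 powr (4 * p / (p + 1)) / (\<mu> * C * lam 1 * Q (k - 1)))"
proof -
  interpret algorithm2_rates f g \<mu> \<sigma> p \<theta> lam a A eps x xt y v xstar d0 C Q
    using f g mu xstar alg d0pos d0_def C_def Q_def by unfold_locales auto
  have "(f (y (Suc k)) + g (y (Suc k))) - (f xstar + g xstar) \<le> ereal (d0\<^sup>2 / (2 * lam 1 * Q k))" for k
    using h_at_eq[of k] h_min_eq h_gap_le[of k] by simp
  moreover have "max ((norm (xstar - x (Suc k)))\<^sup>2) ((norm (xstar - y (Suc k)))\<^sup>2)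
      \<le> d0\<^sup>2 / (\<mu> * lam 1 * Q k)" for k
    using x_dist_le[of k] y_dist_le[of k] by (simp add: dist_bound_def)
  moreover have "v (Suc k) \<in> set_plus_vec (eps_subdiff (eps (Suc k)) f (y (Suc k))) (subdiff g (y (Suc k)))
      \<and> (norm (v (Suc k)))\<^sup>2
          \<le> (1 + \<sigma> * sqrt (1 + \<mu> * C * d0 powr (- 2 * (p - 1) / (p + 1))))\<^sup>2
             * (6 * d0 powr (2 * (3 * p - 1) / (p + 1))) / (\<mu> * C\<^sup>2 * lam 1 * Q (k - 1))
      \<and> eps (Suc k) \<le> 3 * \<sigma>\<^sup>2 * d0 powr (4 * p / (p + 1)) / (\<mu> * C * lam 1 * Q (k - 1))"
    if "1 \<le> k" for k
  proof -
    obtain m where "k = Suc m" using \<open>1 \<le> k\<close> by (cases k) auto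
    then show ?thesis using v_mem[of k] v_norm_le[of m] eps_le[of m] by simp
  qed
  ultimately show ?thesis by blast
qed

end
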